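(* Let $(G,D,\star)$ be a probabilistic metric space such that $\star$ is sup-continuous, let $A$ be a nonempty subset of $G$, and let $f:A\to\Delta^+$ be a probabilistic $1$-Lipschitz map (i.e. $D(x,y)\star f(y)\le f(x)$ for all $x,y\in A$). Then there exists a probabilistic $1$-Lipschitz map $\tilde f:G\to\Delta^+$ with $\tilde f|_A=f$.
   Context: A distribution function is a nondecreasing, left-continuous function $F:[-\infty,+\infty]\to[0,1]$ with $F(-\infty)=0$, $F(+\infty)=1$; $\Delta^+$ is the set of distribution functions with $F(0)=0$, ordered pointwise; $(\Delta^+,\le)$ is a complete lattice with maximum $\mathcal H_0$ ($\mathcal H_0(t)=0$ for $t\le0$, $1$ for $t>0$). A triangle function is a binary operation $\star$ on $\Delta^+$ that is commutative, associative, nondecreasing in each argument, with $F\star\mathcal H_0=F$. It is sup-continuous if $\sup_{i\in I}(F_i\star L)=(\sup_{i\in I}F_i)\star L$ for every nonempty family $(F_i)_{i\in I}\subset\Delta^+$ and every $L\in\Delta^+$. A probabilistic metric space $(G,D,\star)$ consists of a set $G$, a triangle function $\star$ and $D:G\times G\to\Delta^+$ with (i) $D(p,q)=\mathcal H_0$ iff $p=q$; (ii) $D(p,q)=D(q,p)$; (iii) $D(p,q)\star D(q,r)\le D(p,r)$. A map $f:G\to\Delta^+$ is probabilistic $1$-Lipschitz if $D(x,y)\star f(y)\le f(x)$ for all $x,y\in G$. *)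

theory Defs
  imports "HOL-Analysis.Analysis"
begin

type_synonym dfun = "ereal \<Rightarrow> real"

definition distribution_function :: "dfun \<Rightarrow> bool" where
  "distribution_function F \<longleftrightarrow>
     mono F \<and> (\<forall>t. 0 \<le> F t \<and> F t \<le> 1) \<and>
     (\<forall>x::real. ((\<lambda>y::real. F (ereal y)) \<longlongrightarrow> F (ereal x)) (at_left x)) \<and>
     F (-\<infinity>) = 0 \<and> F \<infinity> = 1"

definition DeltaPlus :: "dfun set" where
  "DeltaPlus = {F. distribution_function F \<and> F 0 = 0}"

definition H0 :: dfun where
  "H0 t = (if t \<le> 0 then 0 else 1)"

definition triangle_function :: "(dfun \<Rightarrow> dfun \<Rightarrow> dfun) \<Rightarrow> bool" where
  "triangle_function T \<longleftrightarrow>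
     (\<forall>F\<in>DeltaPlus. \<forall>G\<in>DeltaPlus. T F G \<in> DeltaPlus) \<and>
     (\<forall>F\<in>DeltaPlus. \<forall>G\<in>DeltaPlus. T F G = T G F) \<and>
     (\<forall>F\<in>DeltaPlus. \<forall>G\<in>DeltaPlus. \<forall>K\<in>DeltaPlus. T (T F G) K = T F (T G K)) \<and>
     (\<forall>F\<in>DeltaPlus. \<forall>G\<in>DeltaPlus. \<forall>L\<in>DeltaPlus. F \<le> G \<longrightarrow> T F L \<le> T G L) \<and>
     (\<forall>F\<in>DeltaPlus. T F H0 = F)"

text \<open>The supremum in the complete lattice (Delta+, <=) of a nonempty family
is the pointwise supremum.\<close>
definition dsup :: "'i set \<Rightarrow> ('i \<Rightarrow> dfun) \<Rightarrow> dfun" where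
  "dsup I Fs = (\<lambda>t. SUP i\<in>I. Fs i t)"

definition sup_continuous_tf :: "(dfun \<Rightarrow> dfun \<Rightarrow> dfun) \<Rightarrow> bool" where
  "sup_continuous_tf T \<longleftrightarrow>
     (\<forall>(I::dfun set) (Fs::dfun \<Rightarrow> dfun) L. I \<noteq> {} \<longrightarrow> Fs ` I \<subseteq> DeltaPlus \<longrightarrow> L \<in> DeltaPlus \<longrightarrow>
        dsup I (\<lambda>i. T (Fs i) L) = T (dsup I Fs) L)"

definition PM_space :: "'a set \<Rightarrow> ('a \<Rightarrow> 'a \<Rightarrow> dfun) \<Rightarrow> (dfun \<Rightarrow> dfun \<Rightarrow> dfun) \<Rightarrow> bool" where
  "PM_space G D T \<longleftrightarrow> triangle_function T \<and>
     (\<forall>p\<in>G. \<forall>q\<in>G. D p q \<in> DeltaPlus) \<and>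
     (\<forall>p\<in>G. \<forall>q\<in>G. D p q = H0 \<longleftrightarrow> p = q) \<and>
     (\<forall>p\<in>G. \<forall>q\<in>G. D p q = D q p) \<and>
     (\<forall>p\<in>G. \<forall>q\<in>G. \<forall>r\<in>G. T (D p q) (D q r) \<le> D p r)"

definition prob_lipschitz_on :: "'a set \<Rightarrow> ('a \<Rightarrow> 'a \<Rightarrow> dfun) \<Rightarrow> (dfun \<Rightarrow> dfun \<Rightarrow> dfun) \<Rightarrow> ('a \<Rightarrow> dfun) \<Rightarrow> bool" where
  "prob_lipschitz_on S D T f \<longleftrightarrow>
     (\<forall>x\<in>S. f x \<in> DeltaPlus) \<and> (\<forall>x\<in>S. \<forall>y\<in>S. T (D x y) (f y) \<le> f x)"

end

theory Submission
  imports Defs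
begin

text \<open>McShane's construction: extend f by g x = sup over a in A of T (D x a) (f a).
  Pointwise suprema of nonempty families stay in Delta+, so g takes values in Delta+.
  Sup-continuity moves T (D x y) inside the supremum defining g y, after which the
  triangle inequality T (D x y) (D y a) \<le> D x a gives the Lipschitz property.
  On A the term a = x contributes T H0 (f x) = f x, while the Lipschitz property of f
  bounds every other term by f x.\<close>

lemma DeltaPlusD:
  assumes "F \<in> DeltaPlus"
  shows "mono F" "0 \<le> F t" "F t \<le> 1" "F (-\<infinity>) = 0" "F \<infinity> = 1" "F 0 = 0"
    "((\<lambda>y::real. F (ereal y)) \<longlongrightarrow> F (ereal x)) (at_left x)"
  using assms unfolding DeltaPlus_def distribution_function_def by auto

lemma bdd_above_DeltaPlus_image:
  "(\<And>i. i \<in> I \<Longrightarrow> F i \<in> DeltaPlus) \<Longrightarrow> bdd_above ((\<lambda>i. F i t) ` I)"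
  by (rule bdd_aboveI[where M=1]) (auto dest: DeltaPlusD)

lemma SUP_in_DeltaPlus:
  assumes ne: "I \<noteq> {}" and F: "\<And>i. i \<in> I \<Longrightarrow> F i \<in> DeltaPlus"
  shows "(\<lambda>t. SUP i\<in>I. F i t) \<in> DeltaPlus"
proof -
  let ?S = "\<lambda>t. SUP i\<in>I. F i t"
  have bdd: "\<And>t. bdd_above ((\<lambda>i. F i t) ` I)" by (rule bdd_above_DeltaPlus_image) (rule F)
  have SUP_const: "?S t = c" if "\<And>i. i \<in> I \<Longrightarrow> F i t = c" for t c
    using that ne by simp
  have upper: "F i t \<le> ?S t" if "i \<in> I" for i t using cSUP_upper[OF that bdd] .
  have mono: "mono ?S"
  proof (rule monoI)
    fix s t :: ereal assume "s \<le> t"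
    show "?S s \<le> ?S t"
      by (rule cSUP_mono[OF ne bdd]) (use \<open>s \<le> t\<close> F in \<open>auto dest!: DeltaPlusD(1) monoD\<close>)
  qed
  have nonneg: "0 \<le> ?S t" for t
  proof -
    obtain i where "i \<in> I" using ne by auto
    thus ?thesis using upper[of i t] DeltaPlusD(2)[OF F, of i t] by (meson order_trans)
  qed
  have le_one: "?S t \<le> 1" for t
    by (rule cSUP_least[OF ne]) (use F in \<open>auto dest: DeltaPlusD\<close>)
  have left_cont: "((\<lambda>y::real. ?S (ereal y)) \<longlongrightarrow> ?S (ereal x)) (at_left x)" for x
  proof (rule order_tendstoI)
    fix a assume a: "a > ?S (ereal x)"
    show "\<forall>\<^sub>F y in at_left x. ?S (ereal y) < a"
      unfolding eventually_at_left_field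
      by (rule exI[of _ "x - 1"]) (auto intro: le_less_trans[OF monoD[OF mono] a])
  next
    fix a assume "a < ?S (ereal x)"
    then obtain i where i: "i \<in> I" "a < F i (ereal x)"
      using less_cSUP_iff[OF ne bdd] by blast
    have "\<forall>\<^sub>F y in at_left x. a < F i (ereal y)"
      using order_tendstoD(1)[OF DeltaPlusD(7)[OF F[OF i(1)]] i(2)] .
    thus "\<forall>\<^sub>F y in at_left x. a < ?S (ereal y)"
      by eventually_elim (use upper[OF i(1)] in \<open>fastforce intro: less_le_trans\<close>)
  qed
  have "?S (-\<infinity>) = 0" "?S \<infinity> = 1" "?S 0 = 0"
    by (rule SUP_const; use F in \<open>auto dest: DeltaPlusD\<close>)+
  with mono nonneg le_one left_cont show ?thesis
    unfolding DeltaPlus_def distribution_function_def by auto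
qed

lemma triangle_functionD:
  assumes "triangle_function T"
  shows "F \<in> DeltaPlus \<Longrightarrow> K \<in> DeltaPlus \<Longrightarrow> T F K \<in> DeltaPlus"
    and "F \<in> DeltaPlus \<Longrightarrow> K \<in> DeltaPlus \<Longrightarrow> T F K = T K F"
    and "F \<in> DeltaPlus \<Longrightarrow> K \<in> DeltaPlus \<Longrightarrow> L \<in> DeltaPlus \<Longrightarrow> T (T F K) L = T F (T K L)"
    and "F \<in> DeltaPlus \<Longrightarrow> K \<in> DeltaPlus \<Longrightarrow> L \<in> DeltaPlus \<Longrightarrow> F \<le> K \<Longrightarrow> T F L \<le> T K L"
    and "F \<in> DeltaPlus \<Longrightarrow> T F H0 = F"
  using assms unfolding triangle_function_def by auto

lemma PM_spaceD:
  assumes "PM_space G D T"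
  shows "triangle_function T"
    and "p \<in> G \<Longrightarrow> q \<in> G \<Longrightarrow> D p q \<in> DeltaPlus"
    and "p \<in> G \<Longrightarrow> D p p = H0"
    and "p \<in> G \<Longrightarrow> q \<in> G \<Longrightarrow> r \<in> G \<Longrightarrow> T (D p q) (D q r) \<le> D p r"
  using assms unfolding PM_space_def by auto

definition mcshane_ext ::
    "'a set \<Rightarrow> ('a \<Rightarrow> 'a \<Rightarrow> dfun) \<Rightarrow> (dfun \<Rightarrow> dfun \<Rightarrow> dfun) \<Rightarrow> ('a \<Rightarrow> dfun) \<Rightarrow> 'a \<Rightarrow> dfun" where
  "mcshane_ext A D T f x = (\<lambda>t. SUP a\<in>A. T (D x a) (f a) t)"

context
  fixes G A :: "'a set" and D :: "'a \<Rightarrow> 'a \<Rightarrow> dfun" and T :: "dfun \<Rightarrow> dfun \<Rightarrow> dfun"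
    and f :: "'a \<Rightarrow> dfun"
  assumes pm: "PM_space G D T" and A: "A \<subseteq> G" "A \<noteq> {}"
    and f: "\<And>a. a \<in> A \<Longrightarrow> f a \<in> DeltaPlus"
begin

lemma mcshane_term_in_DeltaPlus:
  assumes "x \<in> G" "a \<in> A"
  shows "T (D x a) (f a) \<in> DeltaPlus"
proof -
  from assms A(1) have "a \<in> G" by auto
  with assms show ?thesis
    by (intro triangle_functionD(1)[OF PM_spaceD(1)[OF pm]] PM_spaceD(2)[OF pm] f)
qed

lemma mcshane_term_le: "x \<in> G \<Longrightarrow> a \<in> A \<Longrightarrow> T (D x a) (f a) t \<le> mcshane_ext A D T f x t"
  unfolding mcshane_ext_def
  by (rule cSUP_upper) (auto intro: bdd_above_DeltaPlus_image mcshane_term_in_DeltaPlus)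

lemma mcshane_ext_in_DeltaPlus: "x \<in> G \<Longrightarrow> mcshane_ext A D T f x \<in> DeltaPlus"
  unfolding mcshane_ext_def by (rule SUP_in_DeltaPlus[OF A(2) mcshane_term_in_DeltaPlus])

lemma mcshane_ext_lipschitz:
  assumes sc: "sup_continuous_tf T" and x: "x \<in> G" and y: "y \<in> G"
  shows "T (D x y) (mcshane_ext A D T f y) \<le> mcshane_ext A D T f x"
proof -
  note tf = PM_spaceD(1)[OF pm] and Dxy = PM_spaceD(2)[OF pm x y]
  let ?I = "(\<lambda>a. T (D y a) (f a)) ` A"
  have gy: "mcshane_ext A D T f y = dsup ?I id"
    unfolding mcshane_ext_def dsup_def by (simp add: image_image)
  have I: "id ` ?I \<subseteq> DeltaPlus" using mcshane_term_in_DeltaPlus y by auto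
  have "T (D x y) (mcshane_ext A D T f y) = T (mcshane_ext A D T f y) (D x y)"
    using triangle_functionD(2)[OF tf Dxy mcshane_ext_in_DeltaPlus[OF y]] .
  also have "\<dots> = dsup ?I (\<lambda>F. T (id F) (D x y))"
    unfolding gy
    by (rule sc[unfolded sup_continuous_tf_def, rule_format, OF _ I Dxy, symmetric])
      (use A(2) in simp)
  also have "\<dots> = (\<lambda>t. SUP a\<in>A. T (T (D y a) (f a)) (D x y) t)"
    unfolding dsup_def by (simp add: image_image)
  also have "\<dots> \<le> mcshane_ext A D T f x"
  proof (rule le_funI, rule cSUP_least[OF A(2)])
    fix t a assume a: "a \<in> A"
    with A(1) have aG: "a \<in> G" by auto
    note Dya = PM_spaceD(2)[OF pm y aG] and fa = f[OF a]
    have "T (T (D y a) (f a)) (D x y) = T (D x y) (T (D y a) (f a))"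
      using Dxy Dya fa by (intro triangle_functionD(1,2)[OF tf])
    also have "\<dots> = T (T (D x y) (D y a)) (f a)"
      by (rule triangle_functionD(3)[OF tf Dxy Dya fa, symmetric])
    also have "\<dots> \<le> T (D x a) (f a)"
      using Dxy Dya fa PM_spaceD(4)[OF pm x y aG] PM_spaceD(2)[OF pm x aG]
      by (intro triangle_functionD(4)[OF tf]) (simp_all add: triangle_functionD(1)[OF tf])
    finally show "T (T (D y a) (f a)) (D x y) t \<le> mcshane_ext A D T f x t"
      using mcshane_term_le[OF x a, of t] by (auto simp: le_fun_def intro: order_trans)
  qed
  finally show ?thesis .
qed

lemma mcshane_ext_eq:
  assumes lip: "\<And>x y. x \<in> A \<Longrightarrow> y \<in> A \<Longrightarrow> T (D x y) (f y) \<le> f x" and x: "x \<in> A"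
  shows "mcshane_ext A D T f x = f x"
proof (rule ext, rule antisym)
  fix t
  from x A(1) have xG: "x \<in> G" by auto
  note tf = PM_spaceD(1)[OF pm] and Dxx = PM_spaceD(3)[OF pm xG]
  have "H0 \<in> DeltaPlus" using PM_spaceD(2)[OF pm xG xG] Dxx by simp
  then have "T (D x x) (f x) = f x"
    unfolding Dxx using triangle_functionD(2,5)[OF tf f[OF x]] by simp
  then show "f x t \<le> mcshane_ext A D T f x t"
    using mcshane_term_le[OF xG x, of t] by simp
  show "mcshane_ext A D T f x t \<le> f x t"
    unfolding mcshane_ext_def
    by (rule cSUP_least[OF A(2)]) (use lip x in \<open>auto simp: le_fun_def\<close>)
qed

end

theorem mainTheorem4:
  fixes G A :: "'a set" and D :: "'a \<Rightarrow> 'a \<Rightarrow> dfun" and T :: "dfun \<Rightarrow> dfun \<Rightarrow> dfun"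
    and f :: "'a \<Rightarrow> dfun"
  assumes "PM_space G D T" and "sup_continuous_tf T"
    and "A \<subseteq> G" and "A \<noteq> {}"
    and "prob_lipschitz_on A D T f"
  shows "\<exists>g. prob_lipschitz_on G D T g \<and> (\<forall>x\<in>A. g x = f x)"
proof (intro exI conjI ballI)
  have f: "\<And>a. a \<in> A \<Longrightarrow> f a \<in> DeltaPlus"
    and lip: "\<And>x y. x \<in> A \<Longrightarrow> y \<in> A \<Longrightarrow> T (D x y) (f y) \<le> f x"
    using assms(5) unfolding prob_lipschitz_on_def by auto
  show "prob_lipschitz_on G D T (mcshane_ext A D T f)"
    unfolding prob_lipschitz_on_def
  proof (intro conjI ballI)
    show "mcshane_ext A D T f x \<in> DeltaPlus" if "x \<in> G" for x
      by (rule mcshane_ext_in_DeltaPlus[OF assms(1,3,4) f that])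
    show "T (D x y) (mcshane_ext A D T f y) \<le> mcshane_ext A D T f x" if "x \<in> G" "y \<in> G" for x y
      by (rule mcshane_ext_lipschitz[OF assms(1,3,4) f assms(2) that])
  qed
  show "mcshane_ext A D T f x = f x" if "x \<in> A" for x
    by (rule mcshane_ext_eq[OF assms(1,3,4) f lip that])
qed

end
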